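(* Assume the standing hypotheses described in the context. If $x,y\in\mathbb X$ and $\|x-x_0\|+\|y-x\|<R$, then \[\|F'(x_0)^{-1}E_F(y,x)\|\le e_f(\|x-x_0\|+\|y-x\|,\ \|x-x_0\|).\]
   Context: Standing hypotheses: $\mathbb X,\mathbb Y$ are Banach spaces; $B(x,r)$ is the open ball. $R\in\mathbb R$, $C\subseteq\mathbb X$, $F:C\to\mathbb Y$ is continuous and continuously differentiable on $\mathrm{int}(C)$, $x_0\in\mathrm{int}(C)$ with $F'(x_0)$ non-singular, $f:[0,R)\to\mathbb R$ is continuously differentiable, $B(x_0,R)\subseteq C$, $\|F'(x_0)^{-1}[F'(y)-F'(x)]\|\le f'(\|y-x\|+\|x-x_0\|)-f'(\|x-x_0\|)$ for all $x,y\in B(x_0,R)$ with $\|x-x_0\|+\|y-x\|<R$, $\|F'(x_0)^{-1}F(x_0)\|\le f(0)$, and (h1) $f(0)>0$, $f'(0)=-1$; (h2) $f'$ is strictly increasing and convex; (h3) $f(t)<0$ for some $t\in(0,R)$. Linearization errors: $E_F(y,x):=F(y)-[F(x)+F'(x)(y-x)]$ for $x\in B(x_0,R)$, $y\in C$; $e_f(v,t):=f(v)-[f(t)+f'(t)(v-t)]$ for $t,v\in[0,R)$. *)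

theory Defs
  imports "HOL-Analysis.Analysis"
begin

definition EF :: "('a::real_normed_vector \<Rightarrow> 'b::real_normed_vector) \<Rightarrow> ('a \<Rightarrow> ('a \<Rightarrow>\<^sub>L 'b)) \<Rightarrow> 'a \<Rightarrow> 'a \<Rightarrow> 'b"
  where "EF F F' y x = F y - (F x + blinfun_apply (F' x) (y - x))"

definition ef :: "(real \<Rightarrow> real) \<Rightarrow> (real \<Rightarrow> real) \<Rightarrow> real \<Rightarrow> real \<Rightarrow> real"
  where "ef f f' v t = f v - (f t + f' t * (v - t))"

end

theory Submission
  imports Defs
begin

text \<open>Along the segment \<open>z t = x + t (y - x)\<close>, the linearization error \<open>E_F(y, x)\<close> is the integral
  of \<open>(F'(z t) - F'(x)) (y - x)\<close> over \<open>[0, 1]\<close>, and \<open>e_f\<close> is the integral of the corresponding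
  scalar expression for \<open>f\<close>. The majorant condition bounds the first integrand pointwise by the
  second, so the two increments compare.\<close>

lemma norm_increment_le_majorant_increment:
  fixes G :: "real \<Rightarrow> 'a::banach"
  assumes "a \<le> b"
    and G: "\<And>t. t \<in> {a..b} \<Longrightarrow> (G has_vector_derivative G' t) (at t within {a..b})"
    and H: "\<And>t. t \<in> {a..b} \<Longrightarrow> (H has_real_derivative H' t) (at t within {a..b})"
    and bound: "\<And>t. t \<in> {a..b} \<Longrightarrow> norm (G' t) \<le> H' t"
  shows "norm (G b - G a) \<le> H b - H a"
proof -
  have "(G' has_integral (G b - G a)) {a..b}"
    using \<open>a \<le> b\<close> G by (rule fundamental_theorem_of_calculus)
  moreover have "(H' has_integral (H b - H a)) {a..b}"
    using \<open>a \<le> b\<close> H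
    by (intro fundamental_theorem_of_calculus) (simp_all add: has_real_derivative_iff_has_vector_derivative)
  ultimately have "norm (G b - G a) \<le> (H b - H a) \<bullet> 1"
    by (rule has_integral_norm_bound_integral_component) (simp add: bound)
  then show ?thesis
    by simp
qed

lemma has_vector_derivative_along_segment:
  fixes F :: "'a::real_normed_vector \<Rightarrow> 'b::real_normed_vector" and L :: "'b \<Rightarrow>\<^sub>L 'c::real_normed_vector"
  assumes "(F has_derivative blinfun_apply (F' (x + t *\<^sub>R v))) (at (x + t *\<^sub>R v))"
  shows "((\<lambda>s. L (F (x + s *\<^sub>R v))) has_vector_derivative L (F' (x + t *\<^sub>R v) v)) (at t within S)"
proof -
  have "((\<lambda>s. x + s *\<^sub>R v) has_derivative (\<lambda>s. s *\<^sub>R v)) (at t within S)"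
    by (auto intro!: derivative_eq_intros)
  from has_derivative_compose[OF this assms]
  have "((\<lambda>s. L (F (x + s *\<^sub>R v))) has_derivative (\<lambda>s. L (F' (x + t *\<^sub>R v) (s *\<^sub>R v)))) (at t within S)"
    by (rule bounded_linear.has_derivative[OF blinfun.bounded_linear_right, unfolded o_def])
  then show ?thesis
    by (simp add: has_vector_derivative_def blinfun.scaleR_right)
qed

lemma has_real_derivative_along_affine:
  assumes f: "(f has_real_derivative D) (at (a + t * d) within T)"
    and img: "(\<lambda>s. a + s * d) ` S \<subseteq> T"
  shows "((\<lambda>s. f (a + s * d)) has_real_derivative D * d) (at t within S)"
proof -
  have "((\<lambda>s. a + s * d) has_real_derivative d) (at t within S)"
    by (auto intro!: derivative_eq_intros)
  from DERIV_image_chain[OF has_field_derivative_subset[OF f img] this]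
  show ?thesis by (simp add: o_def)
qed

lemma norm_linearization_error_le_majorant:
  fixes F :: "'a::real_normed_vector \<Rightarrow> 'b::real_normed_vector" and L :: "'b \<Rightarrow>\<^sub>L 'c::banach"
    and x y :: 'a
  defines "d \<equiv> norm (y - x)"
  assumes F: "\<And>t. t \<in> {0..1} \<Longrightarrow>
      (F has_derivative blinfun_apply (F' (x + t *\<^sub>R (y - x)))) (at (x + t *\<^sub>R (y - x)))"
    and f: "\<And>t. t \<in> {0..1} \<Longrightarrow> (f has_real_derivative f' (a + t * d)) (at (a + t * d) within {a..a + d})"
    and majorant: "\<And>t. t \<in> {0..1} \<Longrightarrow>
      norm (L o\<^sub>L (F' (x + t *\<^sub>R (y - x)) - F' x)) \<le> f' (a + t * d) - f' a"
  shows "norm (L (EF F F' y x)) \<le> ef f f' (a + d) a"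
proof -
  define z where "z t = x + t *\<^sub>R (y - x)" for t
  define G where "G t = L (F (z t)) - t *\<^sub>R L (F' x (y - x))" for t
  define H where "H t = f (a + t * d) - t * (d * f' a)" for t
  have "norm (G 1 - G 0) \<le> H 1 - H 0"
  proof (rule norm_increment_le_majorant_increment)
    fix t :: real assume t: "t \<in> {0..1}"
    have "((\<lambda>s. s *\<^sub>R L (F' x (y - x))) has_vector_derivative L (F' x (y - x))) (at t within {0..1})"
      by (auto intro!: derivative_eq_intros)
    from has_vector_derivative_diff
        [OF has_vector_derivative_along_segment[where F' = F' and L = L and x = x and v = "y - x", OF F[OF t]] this]
    have "(G has_vector_derivative L (F' (z t) (y - x)) - L (F' x (y - x))) (at t within {0..1})"
      unfolding G_def[abs_def] z_def .
    then show "(G has_vector_derivative L ((F' (z t) - F' x) (y - x))) (at t within {0..1})"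
      by (simp only: blinfun.diff_left blinfun.diff_right[of L])
    have "(\<lambda>s. a + s * d) ` {0..1} \<subseteq> {a..a + d}"
      by (auto simp: d_def mult_left_le_one_le)
    from has_real_derivative_along_affine[OF f[OF t] this]
    have f_along: "((\<lambda>s. f (a + s * d)) has_real_derivative f' (a + t * d) * d) (at t within {0..1})" .
    have "((\<lambda>s. s * (d * f' a)) has_real_derivative d * f' a) (at t within {0..1})"
      by (auto intro!: derivative_eq_intros)
    with f_along have "(H has_real_derivative f' (a + t * d) * d - d * f' a) (at t within {0..1})"
      unfolding H_def[abs_def] by (rule DERIV_diff)
    then show "(H has_real_derivative (f' (a + t * d) - f' a) * d) (at t within {0..1})"
      by (simp only: left_diff_distrib mult.commute[of d])
    have "norm (L ((F' (z t) - F' x) (y - x))) \<le> norm (L o\<^sub>L (F' (z t) - F' x)) * d"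
      unfolding d_def using norm_blinfun[of "L o\<^sub>L (F' (z t) - F' x)" "y - x"] by simp
    also have "\<dots> \<le> (f' (a + t * d) - f' a) * d"
      using majorant[OF t] by (simp add: z_def d_def mult_right_mono)
    finally show "norm (L ((F' (z t) - F' x) (y - x))) \<le> (f' (a + t * d) - f' a) * d" .
  qed simp
  moreover have "G 1 - G 0 = L (EF F F' y x)"
    by (simp add: G_def z_def EF_def blinfun.diff_right blinfun.add_right)
  moreover have "H 1 - H 0 = ef f f' (a + d) a"
    by (simp add: H_def ef_def algebra_simps)
  ultimately show ?thesis by simp
qed

theorem lemma3p2:
  fixes F :: "'a::banach \<Rightarrow> 'b::banach"
    and F' :: "'a \<Rightarrow> ('a \<Rightarrow>\<^sub>L 'b)"
    and Finv :: "'b \<Rightarrow>\<^sub>L 'a"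
    and C :: "'a set" and x0 :: 'a and R :: real
    and f f' :: "real \<Rightarrow> real"
    and x y :: 'a
  assumes F_cont: "continuous_on C F"
    and F_deriv: "\<forall>z\<in>interior C. (F has_derivative blinfun_apply (F' z)) (at z)"
    and F'_cont: "continuous_on (interior C) F'"
    and x0_int: "x0 \<in> interior C"
    and Finv_left: "Finv o\<^sub>L F' x0 = id_blinfun"
    and Finv_right: "F' x0 o\<^sub>L Finv = id_blinfun"
    and f_deriv: "\<forall>t\<in>{0..<R}. (f has_real_derivative f' t) (at t within {0..<R})"
    and f'_cont: "continuous_on {0..<R} f'"
    and ball_sub: "ball x0 R \<subseteq> C"
    and majorant: "\<forall>u\<in>ball x0 R. \<forall>v\<in>ball x0 R. norm (u - x0) + norm (v - u) < R \<longrightarrow>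
        norm (Finv o\<^sub>L (F' v - F' u)) \<le> f' (norm (v - u) + norm (u - x0)) - f' (norm (u - x0))"
    and init: "norm (Finv (F x0)) \<le> f 0"
    and h1a: "f 0 > 0" and h1b: "f' 0 = -1"
    and h2a: "strict_mono_on {0..<R} f'" and h2b: "convex_on {0..<R} f'"
    and h3: "\<exists>t\<in>{0<..<R}. f t < 0"
    and xy: "norm (x - x0) + norm (y - x) < R"
  shows "norm (Finv (EF F F' y x)) \<le> ef f f' (norm (x - x0) + norm (y - x)) (norm (x - x0))"
proof (rule norm_linearization_error_le_majorant)
  let ?a = "norm (x - x0)" and ?d = "norm (y - x)"
  fix t :: real assume t: "t \<in> {0..1}"
  let ?z = "x + t *\<^sub>R (y - x)"
  have dist_z: "norm (?z - x) = t * ?d" and "t * ?d \<le> ?d"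
    using t by (simp_all add: mult_left_le_one_le)
  moreover have "norm (?z - x0) \<le> ?a + norm (?z - x)"
    using norm_triangle_ineq[of "x - x0" "?z - x"] by (simp add: algebra_simps)
  ultimately have "norm (?z - x0) < R"
    using xy by linarith
  then have z_ball: "?z \<in> ball x0 R"
    by (simp add: dist_norm norm_minus_commute)
  moreover have "ball x0 R \<subseteq> interior C"
    using ball_sub by (simp add: interior_maximal)
  ultimately show "(F has_derivative blinfun_apply (F' ?z)) (at ?z)"
    using F_deriv by blast
  have "{?a..?a + ?d} \<subseteq> {0..<R}" and "?a + t * ?d \<in> {?a..?a + ?d}"
    using xy \<open>t * ?d \<le> ?d\<close> t by (auto intro: order_trans[OF norm_ge_zero])
  then show "(f has_real_derivative f' (?a + t * ?d)) (at (?a + t * ?d) within {?a..?a + ?d})"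
    using f_deriv has_field_derivative_subset by blast
  have "?a < R"
    using xy norm_ge_zero[of "y - x"] by linarith
  then have x_ball: "x \<in> ball x0 R"
    by (simp add: dist_norm norm_minus_commute)
  have "?a + norm (?z - x) < R"
    using dist_z \<open>t * ?d \<le> ?d\<close> xy by linarith
  then show "norm (Finv o\<^sub>L (F' ?z - F' x)) \<le> f' (?a + t * ?d) - f' ?a"
    using majorant[rule_format, OF x_ball z_ball] unfolding dist_z by (simp add: add.commute)
qed

end
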